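(* Let $F$ be a positively expansive cellular automaton on $A^{\mathbb Z}$ and $\mu$ a $\sigma$-ergodic, $F$-invariant Borel probability measure. Then there exists a real $s>0$ such that $M_\mu((s,s))=1$.
   Context: $A$ is a finite alphabet, $\sigma(x)_i=x_{i+1}$, and $d(x,y)=2^{-\min\{|j|: x_j\ne y_j\}}$. $F$ is a cellular automaton of radius $r$, i.e. $F(x)_i=f(x_{i-r},\dots,x_{i+r})$. $B_n(x)=\{y: d(F^ix,F^iy)<2^{-n}\ \forall i\ge0\}$. $F$ is positively expansive if there is $n$ with $B_n(x)=\{x\}$ for all $x$. For $p\ge0$: ${}^{\{n\}}\alpha_p^F(x)=\{y:F^i(y)_j=F^i(x)_j\ \forall0\le i\le n,\ |j|\le p\}$. For a speed given by $g^\pm_n:A^{\mathbb Z}\to\mathbb N$, set $|G_n(x)|=g^+_n(x)+g^-_n(x)+1$ and $J_n(x)=\{j:-g^+_n(x)-p\le j\le g^-_n(x)+p\}$. For $y\in A^{\mathbb Z}$, ${}^{G_n(x)}\alpha_p^\sigma(y)=\{z:z_j=y_j\ \forall j\in J_n(x)\}$. For $0<\delta<1$, $\eta_{n,\delta}$ is the infimum of $\varepsilon>0$ such that some measurable $S$ with $\mu(S)\ge1-\delta$ satisfies $$\Big|\frac{-\log\mu({}^{G_i(x)}\alpha_p^\sigma(x))}{|G_i(x)|}-h_\mu(\sigma)\Big|<\varepsilon\quad\text{for all } x\in S,\ i\ge n.$$ $X^G_{n,\delta,p}$ is the set of $x$ for which this quantity, taken with $i=n$, is $\le\eta_{n,\delta}$.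 $\langle T^G_{n,p}(x)\rangle=\{z|_{J_n(x)}:z\in{}^{\{n\}}\alpha_p^F(x)\}$, and $T^G_{n,p}(x)$ is the union of the cylinders $\{z:z|_{J_n(x)}=w\}$ over these $w$. $T^G_{n,\delta,p}(x)=T^G_{n,p}(x)\cap X^G_{n,\delta,p}$ and $\langle T^G_{n,\delta,p}(x)\rangle=\{z|_{J_n(x)}:z\in T^G_{n,\delta,p}(x)\}$. $$M_{n,p,\delta}(G)=\int\Big(1-\frac{\log\#\langle T^G_{n,\delta,p}(x)\rangle}{-\log\mu({}^{G_n(x)}\alpha_p^\sigma(x))}\Big)d\mu(x),\qquad M_\mu(G)=\sup_p\limsup_{\delta\to0}\limsup_{n\to\infty}M_{n,p,\delta}(G).$$ $M_\mu((s,s))$ denotes $M_\mu(G)$ for $g^+_n=g^-_n=\lceil sn\rceil$. *)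

theory Defs
  imports "HOL-Probability.Probability"
begin

type_synonym 'a config = "int \<Rightarrow> 'a"

definition shift :: "'a config \<Rightarrow> 'a config" where
  "shift x = (\<lambda>i. x (i + 1))"

definition cellular_automaton :: "('a config \<Rightarrow> 'a config) \<Rightarrow> bool" where
  "cellular_automaton F \<longleftrightarrow>
     (\<exists>(r::nat) (f::'a list \<Rightarrow> 'a). \<forall>x i. F x i = f (map (\<lambda>k. x (i + k)) [- int r..int r]))"

definition cdist :: "'a config \<Rightarrow> 'a config \<Rightarrow> real" where
  "cdist x y = (if x = y then 0
      else 2 powr (- real (LEAST k::nat. \<exists>j. nat \<bar>j\<bar> = k \<and> x j \<noteq> y j)))"

definition dyn_ball :: "('a config \<Rightarrow> 'a config) \<Rightarrow> nat \<Rightarrow> 'a config \<Rightarrow> 'a config set" where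
  "dyn_ball F n x = {y. \<forall>i. cdist ((F ^^ i) x) ((F ^^ i) y) < 2 powr (- real n)}"

definition pos_expansive :: "('a config \<Rightarrow> 'a config) \<Rightarrow> bool" where
  "pos_expansive F \<longleftrightarrow> (\<exists>n. \<forall>x. dyn_ball F n x = {x})"

text \<open>Borel probability measures on A^Z (finite alphabet: Borel = product sigma algebra).\<close>
definition config_prob :: "'a config measure \<Rightarrow> bool" where
  "config_prob \<mu> \<longleftrightarrow> prob_space \<mu> \<and>
     sets \<mu> = sets (Pi\<^sub>M (UNIV::int set) (\<lambda>_. count_space (UNIV::'a set)))"

definition invariant_measure :: "'a config measure \<Rightarrow> ('a config \<Rightarrow> 'a config) \<Rightarrow> bool" where
  "invariant_measure \<mu> T \<longleftrightarrow>
     (\<forall>A\<in>sets \<mu>. T -` A \<inter> space \<mu> \<in> sets \<mu> \<and> emeasure \<mu> (T -` A \<inter> space \<mu>) = emeasure \<mu> A)"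

definition ergodic_measure :: "'a config measure \<Rightarrow> ('a config \<Rightarrow> 'a config) \<Rightarrow> bool" where
  "ergodic_measure \<mu> T \<longleftrightarrow> invariant_measure \<mu> T \<and>
     (\<forall>A\<in>sets \<mu>. T -` A \<inter> space \<mu> = A \<longrightarrow> measure \<mu> A = 0 \<or> measure \<mu> A = 1)"

text \<open>Kolmogorov-Sinai entropy (natural logarithm), finite measurable partitions given
  as measurable maps with finite range.\<close>
definition part_entropy :: "'b measure \<Rightarrow> ('b \<Rightarrow> 'c) \<Rightarrow> real" where
  "part_entropy \<mu> \<xi> =
     - (\<Sum>c\<in>\<xi> ` space \<mu>. measure \<mu> (\<xi> -` {c} \<inter> space \<mu>) * ln (measure \<mu> (\<xi> -` {c} \<inter> space \<mu>)))"

definition fin_partition :: "'b measure \<Rightarrow> ('b \<Rightarrow> nat) \<Rightarrow> bool" where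
  "fin_partition \<mu> \<xi> \<longleftrightarrow> \<xi> \<in> measurable \<mu> (count_space UNIV) \<and> finite (\<xi> ` space \<mu>)"

definition entropy_wrt :: "'b measure \<Rightarrow> ('b \<Rightarrow> 'b) \<Rightarrow> ('b \<Rightarrow> nat) \<Rightarrow> real" where
  "entropy_wrt \<mu> T \<xi> =
     lim (\<lambda>n. part_entropy \<mu> (\<lambda>x. map (\<lambda>i. \<xi> ((T ^^ i) x)) [0..<Suc n]) / real (Suc n))"

definition ks_entropy :: "'b measure \<Rightarrow> ('b \<Rightarrow> 'b) \<Rightarrow> real" where
  "ks_entropy \<mu> T = Sup {entropy_wrt \<mu> T \<xi> | \<xi>. fin_partition \<mu> \<xi>}"

type_synonym 'a speed = "(nat \<Rightarrow> 'a config \<Rightarrow> nat) \<times> (nat \<Rightarrow> 'a config \<Rightarrow> nat)"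

definition Gsize :: "'a speed \<Rightarrow> nat \<Rightarrow> 'a config \<Rightarrow> nat" where
  "Gsize G n x = fst G n x + snd G n x + 1"

definition Jset :: "'a speed \<Rightarrow> nat \<Rightarrow> nat \<Rightarrow> 'a config \<Rightarrow> int set" where
  "Jset G n p x = {j. - int (fst G n x) - int p \<le> j \<and> j \<le> int (snd G n x) + int p}"

definition F_alpha :: "('a config \<Rightarrow> 'a config) \<Rightarrow> nat \<Rightarrow> nat \<Rightarrow> 'a config \<Rightarrow> 'a config set" where
  "F_alpha F n p x = {y. \<forall>i\<le>n. \<forall>j. \<bar>j\<bar> \<le> int p \<longrightarrow> (F ^^ i) y j = (F ^^ i) x j}"

definition G_alpha :: "'a speed \<Rightarrow> nat \<Rightarrow> nat \<Rightarrow> 'a config \<Rightarrow> 'a config \<Rightarrow> 'a config set" where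
  "G_alpha G n p x y = {z. \<forall>j\<in>Jset G n p x. z j = y j}"

definition info_rate :: "'a config measure \<Rightarrow> 'a speed \<Rightarrow> nat \<Rightarrow> nat \<Rightarrow> 'a config \<Rightarrow> real" where
  "info_rate \<mu> G n p x = - ln (measure \<mu> (G_alpha G n p x x)) / real (Gsize G n x)"

definition eta :: "'a config measure \<Rightarrow> 'a speed \<Rightarrow> nat \<Rightarrow> real \<Rightarrow> nat \<Rightarrow> real" where
  "eta \<mu> G n \<delta> p = Inf {\<epsilon>. \<epsilon> > 0 \<and> (\<exists>S\<in>sets \<mu>. measure \<mu> S \<ge> 1 - \<delta> \<and>
       (\<forall>x\<in>S. \<forall>i\<ge>n. \<bar>info_rate \<mu> G i p x - ks_entropy \<mu> shift\<bar> < \<epsilon>))}"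

definition XG :: "'a config measure \<Rightarrow> 'a speed \<Rightarrow> nat \<Rightarrow> real \<Rightarrow> nat \<Rightarrow> 'a config set" where
  "XG \<mu> G n \<delta> p = {x. \<bar>info_rate \<mu> G n p x - ks_entropy \<mu> shift\<bar> \<le> eta \<mu> G n \<delta> p}"

definition TG :: "('a config \<Rightarrow> 'a config) \<Rightarrow> 'a speed \<Rightarrow> nat \<Rightarrow> nat \<Rightarrow> 'a config \<Rightarrow> 'a config set" where
  "TG F G n p x = {z. \<exists>w\<in>F_alpha F n p x. \<forall>j\<in>Jset G n p x. z j = w j}"

definition TG_delta_words ::
  "'a config measure \<Rightarrow> ('a config \<Rightarrow> 'a config) \<Rightarrow> 'a speed \<Rightarrow> nat \<Rightarrow> real \<Rightarrow> nat \<Rightarrow> 'a config \<Rightarrow> (int \<Rightarrow> 'a) set" where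
  "TG_delta_words \<mu> F G n \<delta> p x =
     (\<lambda>z. restrict z (Jset G n p x)) ` (TG F G n p x \<inter> XG \<mu> G n \<delta> p)"

definition M_npd :: "'a config measure \<Rightarrow> ('a config \<Rightarrow> 'a config) \<Rightarrow> 'a speed \<Rightarrow> nat \<Rightarrow> nat \<Rightarrow> real \<Rightarrow> real" where
  "M_npd \<mu> F G n p \<delta> = (\<integral>x. (1 - ln (real (card (TG_delta_words \<mu> F G n \<delta> p x)))
                                 / (- ln (measure \<mu> (G_alpha G n p x x)))) \<partial>\<mu>)"

definition M_mu :: "'a config measure \<Rightarrow> ('a config \<Rightarrow> 'a config) \<Rightarrow> 'a speed \<Rightarrow> ereal" where
  "M_mu \<mu> F G = (SUP p. Limsup (at_right 0)
                   (\<lambda>\<delta>. limsup (\<lambda>n. ereal (M_npd \<mu> F G n p \<delta>))))"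

definition sym_speed :: "real \<Rightarrow> 'a speed" where
  "sym_speed s = ((\<lambda>n x. nat \<lceil>s * real n\<rceil>), (\<lambda>n x. nat \<lceil>s * real n\<rceil>))"

end

theory Submission
  imports Defs
begin

(* A positively expansive cellular automaton F, with expansivity window [-N, N], has a finite
   horizon: by compactness of A^Z there is T such that agreement of the F-orbits of x and y on
   [-N, N] during T steps forces x and y to agree on [-N-1, N+1].  As F commutes with
   translations, the same holds for every window [-m, m] with m >= N, and iterating shows that
   agreement on [-N, N] during k T steps forces agreement on [-N-k, N+k].  So for the speed
   s = 1/(2T) the cylinder {n}alpha_N^F(x) already fixes x on all of J_n(x): the set
   T^G_{n,delta,N}(x) contains at most one word, and the integrand of M_{n,N,delta} is 1 for
   n >= T.  Since that integrand never exceeds 1, M_mu((s,s)) = 1. *)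

definition agree_on :: "'i set \<Rightarrow> ('i \<Rightarrow> 'b) \<Rightarrow> ('i \<Rightarrow> 'b) \<Rightarrow> bool" where
  "agree_on K x y \<longleftrightarrow> (\<forall>j\<in>K. x j = y j)"

definition window_determined :: "'i set \<Rightarrow> ('i \<Rightarrow> 'b) set \<Rightarrow> bool" where
  "window_determined K P \<longleftrightarrow> (\<forall>z w. agree_on K z w \<longrightarrow> z \<in> P \<longrightarrow> w \<in> P)"

abbreviation cantor_topology :: "('i \<Rightarrow> 'b) topology" where
  "cantor_topology \<equiv> product_topology (\<lambda>_. discrete_topology UNIV) UNIV"

lemma agree_on_sym: "agree_on K x y \<Longrightarrow> agree_on K y x"
  by (simp add: agree_on_def)

lemma agree_on_trans: "agree_on K x y \<Longrightarrow> agree_on K y z \<Longrightarrow> agree_on K x z"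
  by (simp add: agree_on_def)

lemma agree_on_subset: "agree_on K x y \<Longrightarrow> L \<subseteq> K \<Longrightarrow> agree_on L x y"
  by (auto simp: agree_on_def)

lemma agree_on_Un: "agree_on (K \<union> L) x y \<longleftrightarrow> agree_on K x y \<and> agree_on L x y"
  by (auto simp: agree_on_def)

lemma agree_on_comp: "agree_on K z w \<Longrightarrow> agree_on K (g \<circ> z) (g \<circ> w)"
  by (simp add: agree_on_def)

lemma window_determined_Compl: "window_determined K P \<Longrightarrow> window_determined K (- P)"
  unfolding window_determined_def by (metis ComplD ComplI agree_on_sym)

lemma window_determined_Int:
  "window_determined K P \<Longrightarrow> window_determined L Q \<Longrightarrow> window_determined (K \<union> L) (P \<inter> Q)"
  unfolding window_determined_def agree_on_Un by blast

lemma window_determined_not_agree_on: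
  "window_determined K {z. \<not> agree_on K (fst \<circ> z) (snd \<circ> z)}"
  unfolding window_determined_def agree_on_def by auto

lemma openin_cantor_window_determined:
  assumes "finite K" and "window_determined K P"
  shows "openin cantor_topology P"
proof (subst openin_subopen, intro ballI)
  fix z assume "z \<in> P"
  let ?C = "(\<Inter>j\<in>K. {w. w j = z j}) \<inter> topspace cantor_topology"
  have "openin cantor_topology {w. w j = z j}" for j
    using openin_continuous_map_preimage[OF continuous_map_product_projection,
        of j UNIV "\<lambda>_. discrete_topology UNIV" "{z j}"]
    by (simp add: vimage_def)
  then have "openin cantor_topology ?C"
    using \<open>finite K\<close> by blast
  moreover have "?C \<subseteq> P"
  proof
    fix w assume "w \<in> ?C"
    then have "agree_on K z w"
      by (simp add: agree_on_def)
    with assms(2) \<open>z \<in> P\<close> show "w \<in> P"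
      unfolding window_determined_def by blast
  qed
  ultimately show "\<exists>C. openin cantor_topology C \<and> z \<in> C \<and> C \<subseteq> P"
    using \<open>z \<in> P\<close> by auto
qed

lemma closedin_cantor_window_determined:
  assumes "finite K" and "window_determined K P"
  shows "closedin cantor_topology P"
  using openin_cantor_window_determined[OF assms(1) window_determined_Compl[OF assms(2)]]
  by (simp add: closedin_def Compl_eq_Diff_UNIV)

lemma window_determined_nest_nonempty:
  fixes P :: "nat \<Rightarrow> ('i \<Rightarrow> 'b::finite) set"
  assumes "decseq P" and "\<And>n. P n \<noteq> {}"
    and "\<And>n. \<exists>K. finite K \<and> window_determined K (P n)"
  shows "(\<Inter>n. P n) \<noteq> {}"
proof (rule compact_space_imp_nest[OF _ _ assms(2,1)])
  show "compact_space (cantor_topology :: ('i \<Rightarrow> 'b) topology)"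
    by (simp add: compact_space_product_topology compact_space_discrete_topology)
  show "closedin cantor_topology (P n)" for n
    using assms(3)[of n] closedin_cantor_window_determined by blast
qed

lemma cdist_less_if_agree_on:
  assumes "agree_on {- int n..int n} x y"
  shows "cdist x y < 2 powr - real n"
proof (cases "x = y")
  case False
  define L where "L = (LEAST k::nat. \<exists>j. nat \<bar>j\<bar> = k \<and> x j \<noteq> y j)"
  from False obtain j0 where "x j0 \<noteq> y j0"
    by auto
  have "\<exists>j. nat \<bar>j\<bar> = L \<and> x j \<noteq> y j"
    unfolding L_def by (rule LeastI_ex) (use \<open>x j0 \<noteq> y j0\<close> in blast)
  then obtain j where "nat \<bar>j\<bar> = L" and "x j \<noteq> y j"
    by blast
  with assms have "j \<notin> {- int n..int n}"
    by (auto simp: agree_on_def)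
  with \<open>nat \<bar>j\<bar> = L\<close> have "n < L"
    by auto
  then have "2 powr - real L < 2 powr - real n"
    by (intro powr_less_mono) auto
  moreover have "cdist x y = 2 powr - real L"
    using False by (simp only: cdist_def L_def if_False)
  ultimately show ?thesis
    by simp
qed (simp add: cdist_def)

lemma pos_expansive_agree_on:
  assumes "pos_expansive F"
  obtains N where "\<And>x y. \<forall>i. agree_on {- int N..int N} ((F ^^ i) x) ((F ^^ i) y) \<Longrightarrow> x = y"
proof -
  obtain N where N: "\<And>x. dyn_ball F N x = {x}"
    using assms unfolding pos_expansive_def by blast
  have "x = y" if "\<forall>i. agree_on {- int N..int N} ((F ^^ i) x) ((F ^^ i) y)" for x y
  proof -
    have "y \<in> dyn_ball F N x"
      using that cdist_less_if_agree_on unfolding dyn_ball_def by blast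
    then show ?thesis
      using N by simp
  qed
  then show thesis
    using that by blast
qed

definition has_local_rule :: "('a config \<Rightarrow> 'a config) \<Rightarrow> nat \<Rightarrow> ('a list \<Rightarrow> 'a) \<Rightarrow> bool" where
  "has_local_rule F r f \<longleftrightarrow> (\<forall>x i. F x i = f (map (\<lambda>k. x (i + k)) [- int r..int r]))"

lemma cellular_automatonE:
  assumes "cellular_automaton F"
  obtains r f where "has_local_rule F r f"
  using assms unfolding cellular_automaton_def has_local_rule_def by blast

definition translate :: "int \<Rightarrow> 'a config \<Rightarrow> 'a config" where
  "translate t x = (\<lambda>j. x (j + t))"

lemma agree_on_translate:
  "agree_on {a..b} (translate t x) (translate t y) \<longleftrightarrow> agree_on {a + t..b + t} x y"
proof
  assume "agree_on {a..b} (translate t x) (translate t y)"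
  then have "x (i - t + t) = y (i - t + t)" if "i \<in> {a + t..b + t}" for i
    using that unfolding agree_on_def translate_def by fastforce
  then show "agree_on {a + t..b + t} x y"
    by (simp add: agree_on_def)
qed (auto simp: agree_on_def translate_def)

context
  fixes F :: "'a config \<Rightarrow> 'a config" and r :: nat and f :: "'a list \<Rightarrow> 'a"
  assumes rule: "has_local_rule F r f"
begin

lemma local_rule: "F x i = f (map (\<lambda>k. x (i + k)) [- int r..int r])"
  using rule by (simp add: has_local_rule_def)

lemma ca_light_cone:
  "agree_on {a - int (n * r)..b + int (n * r)} x y \<Longrightarrow> agree_on {a..b} ((F ^^ n) x) ((F ^^ n) y)"
proof (induction n arbitrary: a b)
  case (Suc n)
  have IH: "agree_on {a - int r..b + int r} ((F ^^ n) x) ((F ^^ n) y)"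
    by (intro Suc.IH) (use Suc.prems in \<open>simp add: algebra_simps\<close>)
  show ?case
    unfolding agree_on_def
  proof
    fix j assume "j \<in> {a..b}"
    with IH have neighbourhood:
      "map (\<lambda>k. (F ^^ n) x (j + k)) [- int r..int r] = map (\<lambda>k. (F ^^ n) y (j + k)) [- int r..int r]"
      by (auto simp: agree_on_def)
    have "(F ^^ Suc n) x j = f (map (\<lambda>k. (F ^^ n) x (j + k)) [- int r..int r])"
      using local_rule[of "(F ^^ n) x" j] by simp
    also have "\<dots> = (F ^^ Suc n) y j"
      unfolding neighbourhood using local_rule[of "(F ^^ n) y" j] by simp
    finally show "(F ^^ Suc n) x j = (F ^^ Suc n) y j" .
  qed
qed simp

lemma ca_translate: "F (translate t x) = translate t (F x)"
proof
  fix j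
  have "F (translate t x) j = f (map (\<lambda>k. translate t x (j + k)) [- int r..int r])"
    by (rule local_rule[of "translate t x" j])
  also have "\<dots> = f (map (\<lambda>k. x (j + t + k)) [- int r..int r])"
    by (simp add: translate_def ac_simps)
  also have "\<dots> = translate t (F x) j"
    by (simp add: translate_def local_rule[of x "j + t"])
  finally show "F (translate t x) j = translate t (F x) j" .
qed

lemma funpow_ca_translate: "(F ^^ n) (translate t x) = translate t ((F ^^ n) x)"
proof (induction n)
  case (Suc n)
  then show ?case
    by (simp only: funpow.simps(2) comp_apply ca_translate)
qed simp

lemma ca_horizon_translate:
  assumes horizon: "\<And>x y. \<forall>i\<le>T. agree_on {a..b} ((F ^^ i) x) ((F ^^ i) y) \<Longrightarrow> agree_on {c..d} x y"
    and "\<forall>i\<le>T. agree_on {a + t..b + t} ((F ^^ i) x) ((F ^^ i) y)"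
  shows "agree_on {c + t..d + t} x y"
proof -
  have "\<forall>i\<le>T. agree_on {a..b} ((F ^^ i) (translate t x)) ((F ^^ i) (translate t y))"
    using assms(2) by (simp add: funpow_ca_translate agree_on_translate)
  then have "agree_on {c..d} (translate t x) (translate t y)"
    by (rule horizon)
  then show ?thesis
    by (simp add: agree_on_translate)
qed

lemma window_determined_orbits_agree_on:
  "window_determined {a - int (T * r)..b + int (T * r)}
     {z. \<forall>i\<le>T. agree_on {a..b} ((F ^^ i) (fst \<circ> z)) ((F ^^ i) (snd \<circ> z))}"
  unfolding window_determined_def
proof (intro allI impI)
  fix z w :: "int \<Rightarrow> 'a \<times> 'a"
  assume agree: "agree_on {a - int (T * r)..b + int (T * r)} z w"
  have cone: "agree_on {a..b} ((F ^^ i) (g \<circ> z)) ((F ^^ i) (g \<circ> w))"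
    if "i \<le> T" for i and g :: "'a \<times> 'a \<Rightarrow> 'a"
  proof (rule ca_light_cone)
    have "{a - int (i * r)..b + int (i * r)} \<subseteq> {a - int (T * r)..b + int (T * r)}"
      using \<open>i \<le> T\<close> by (auto intro: mult_right_mono)
    then show "agree_on {a - int (i * r)..b + int (i * r)} (g \<circ> z) (g \<circ> w)"
      using agree by (blast intro: agree_on_subset agree_on_comp)
  qed
  assume "z \<in> {z. \<forall>i\<le>T. agree_on {a..b} ((F ^^ i) (fst \<circ> z)) ((F ^^ i) (snd \<circ> z))}"
  with cone show "w \<in> {z. \<forall>i\<le>T. agree_on {a..b} ((F ^^ i) (fst \<circ> z)) ((F ^^ i) (snd \<circ> z))}"
    by (blast intro: agree_on_trans agree_on_sym)
qed

end

lemma ca_expansive_finite_horizon: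
  fixes F :: "('a::finite) config \<Rightarrow> 'a config"
  assumes "cellular_automaton F" and "finite K"
    and expansive: "\<And>x y. \<forall>i. agree_on {- int N..int N} ((F ^^ i) x) ((F ^^ i) y) \<Longrightarrow> x = y"
  obtains T where
    "\<And>x y. \<forall>i\<le>T. agree_on {- int N..int N} ((F ^^ i) x) ((F ^^ i) y) \<Longrightarrow> agree_on K x y"
proof (rule ccontr)
  let ?W = "{- int N..int N}"
  assume "\<not> thesis"
  then have counterexample: "\<exists>x y. (\<forall>i\<le>T. agree_on ?W ((F ^^ i) x) ((F ^^ i) y)) \<and> \<not> agree_on K x y" for T
    using that by blast
  obtain r f where rule: "has_local_rule F r f"
    using assms(1) by (rule cellular_automatonE)
  (* Pairs (x, y) are encoded as configurations over 'a \<times> 'a, so that compactness of a single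
     Cantor space applies to them. *)
  define P where "P T =
    {z. \<forall>i\<le>T. agree_on ?W ((F ^^ i) (fst \<circ> z)) ((F ^^ i) (snd \<circ> z))} \<inter>
    {z :: int \<Rightarrow> 'a \<times> 'a. \<not> agree_on K (fst \<circ> z) (snd \<circ> z)}" for T
  have "decseq P"
    by (auto simp: decseq_def P_def)
  moreover have "P T \<noteq> {}" for T
  proof -
    obtain x y where "(\<forall>i\<le>T. agree_on ?W ((F ^^ i) x) ((F ^^ i) y)) \<and> \<not> agree_on K x y"
      using counterexample by blast
    moreover have "fst \<circ> (\<lambda>j. (x j, y j)) = x" and "snd \<circ> (\<lambda>j. (x j, y j)) = y"
      by auto
    ultimately have "(\<lambda>j. (x j, y j)) \<in> P T"
      by (simp add: P_def)
    then show ?thesis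
      by blast
  qed
  moreover have "\<exists>L. finite L \<and> window_determined L (P T)" for T
    using window_determined_Int[OF window_determined_orbits_agree_on[OF rule]
        window_determined_not_agree_on] \<open>finite K\<close>
    unfolding P_def by blast
  ultimately obtain z where "z \<in> (\<Inter>T. P T)"
    using window_determined_nest_nonempty by blast
  then have "\<forall>i. agree_on ?W ((F ^^ i) (fst \<circ> z)) ((F ^^ i) (snd \<circ> z))"
    by (auto simp: P_def)
  then have "fst \<circ> z = snd \<circ> z"
    by (rule expansive)
  then have "agree_on K (fst \<circ> z) (snd \<circ> z)"
    by (simp add: agree_on_def)
  with \<open>z \<in> (\<Inter>T. P T)\<close> show False
    by (simp add: P_def)
qed

lemma ca_expansive_window_step:
  fixes F :: "('a::finite) config \<Rightarrow> 'a config"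
  assumes "cellular_automaton F"
    and expansive: "\<And>x y. \<forall>i. agree_on {- int N..int N} ((F ^^ i) x) ((F ^^ i) y) \<Longrightarrow> x = y"
  obtains T where "\<And>x y m. int N \<le> m \<Longrightarrow> \<forall>i\<le>T. agree_on {- m..m} ((F ^^ i) x) ((F ^^ i) y) \<Longrightarrow>
    agree_on {- m - 1..m + 1} x y"
proof -
  obtain r f where rule: "has_local_rule F r f"
    using assms(1) by (rule cellular_automatonE)
  obtain T where horizon: "\<And>x y. \<forall>i\<le>T. agree_on {- int N..int N} ((F ^^ i) x) ((F ^^ i) y) \<Longrightarrow>
      agree_on {- int N - 1..int N + 1} x y"
    using ca_expansive_finite_horizon[OF assms(1) _ expansive, of "{- int N - 1..int N + 1}"] by blast
  have shifted: "agree_on {c - int N - 1..c + int N + 1} x y"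
    if "\<forall>i\<le>T. agree_on {c - int N..c + int N} ((F ^^ i) x) ((F ^^ i) y)" for c x y
    using ca_horizon_translate[OF rule horizon, where t = c] that by (simp add: algebra_simps)
  have "agree_on {- m - 1..m + 1} x y"
    if "int N \<le> m" and agree: "\<forall>i\<le>T. agree_on {- m..m} ((F ^^ i) x) ((F ^^ i) y)" for x y m
  proof -
    have inner: "agree_on {c - int N..c + int N} ((F ^^ i) x) ((F ^^ i) y)"
      if "c \<in> {m - int N, int N - m}" and "i \<le> T" for c i
    proof (rule agree_on_subset)
      show "agree_on {- m..m} ((F ^^ i) x) ((F ^^ i) y)"
        using agree \<open>i \<le> T\<close> by blast
      show "{c - int N..c + int N} \<subseteq> {- m..m}"
        using that \<open>int N \<le> m\<close> by auto
    qed
    (* [-m-1, m+1] is covered by [-m, m] and the translates of [-N-1, N+1] by m-N and N-m. *)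
    have "agree_on {(m - int N) - int N - 1..(m - int N) + int N + 1} x y"
      by (rule shifted) (use inner[of "m - int N"] in simp)
    moreover have "agree_on {(int N - m) - int N - 1..(int N - m) + int N + 1} x y"
      by (rule shifted) (use inner[of "int N - m"] in simp)
    moreover have "agree_on {- m..m} x y"
      using agree by auto
    ultimately have "agree_on ({m - 2 * int N - 1..m + 1} \<union> {- m - 1..2 * int N - m + 1} \<union> {- m..m}) x y"
      by (simp add: agree_on_Un algebra_simps)
    then show ?thesis
      by (rule agree_on_subset) (use \<open>int N \<le> m\<close> in auto)
  qed
  then show thesis
    by (rule that)
qed

lemma window_step_iterate:
  fixes F :: "'b config \<Rightarrow> 'b config"
  assumes step: "\<And>x y m. int N \<le> m \<Longrightarrow> \<forall>i\<le>T. agree_on {- m..m} ((F ^^ i) x) ((F ^^ i) y) \<Longrightarrow>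
      agree_on {- m - 1..m + 1} x y"
    and "\<forall>i\<le>t + k * T. agree_on {- int N..int N} ((F ^^ i) x) ((F ^^ i) y)"
  shows "\<forall>i\<le>t. agree_on {- int N - int k..int N + int k} ((F ^^ i) x) ((F ^^ i) y)"
  using assms(2)
proof (induction k arbitrary: t)
  case (Suc k)
  have "t + Suc k * T = (t + T) + k * T"
    by simp
  with Suc.prems have IH: "\<forall>i\<le>t + T. agree_on {- int N - int k..int N + int k} ((F ^^ i) x) ((F ^^ i) y)"
    by (intro Suc.IH) simp
  show ?case
  proof (intro allI impI)
    fix i assume "i \<le> t"
    have "\<forall>i'\<le>T. agree_on {- (int N + int k)..int N + int k} ((F ^^ i') ((F ^^ i) x)) ((F ^^ i') ((F ^^ i) y))"
    proof (intro allI impI)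
      fix i' assume "i' \<le> T"
      with IH \<open>i \<le> t\<close> have "agree_on {- int N - int k..int N + int k} ((F ^^ (i' + i)) x) ((F ^^ (i' + i)) y)"
        by simp
      then show "agree_on {- (int N + int k)..int N + int k} ((F ^^ i') ((F ^^ i) x)) ((F ^^ i') ((F ^^ i) y))"
        by (simp add: funpow_add)
    qed
    then have "agree_on {- (int N + int k) - 1..int N + int k + 1} ((F ^^ i) x) ((F ^^ i) y)"
      by (intro step) auto
    then show "agree_on {- int N - int (Suc k)..int N + int (Suc k)} ((F ^^ i) x) ((F ^^ i) y)"
      by (simp add: algebra_simps)
  qed
qed simp

lemma pos_expansive_ca_linear_window:
  fixes F :: "('a::finite) config \<Rightarrow> 'a config"
  assumes "cellular_automaton F" and "pos_expansive F"
  obtains N T where "T > 0"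
    and "\<And>x y k. \<forall>i\<le>k * T. agree_on {- int N..int N} ((F ^^ i) x) ((F ^^ i) y) \<Longrightarrow>
           agree_on {- int N - int k..int N + int k} x y"
proof -
  obtain N where expansive: "\<And>x y. \<forall>i. agree_on {- int N..int N} ((F ^^ i) x) ((F ^^ i) y) \<Longrightarrow> x = y"
    using pos_expansive_agree_on[OF assms(2)] by blast
  obtain T where step: "\<And>x y m. int N \<le> m \<Longrightarrow> \<forall>i\<le>T. agree_on {- m..m} ((F ^^ i) x) ((F ^^ i) y) \<Longrightarrow>
      agree_on {- m - 1..m + 1} x y"
    using ca_expansive_window_step[OF assms(1) expansive] by metis
  show thesis
  proof (rule that[of "Suc T" N])
    fix x y k assume "\<forall>i\<le>k * Suc T. agree_on {- int N..int N} ((F ^^ i) x) ((F ^^ i) y)"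
    then have "\<forall>i\<le>0 + k * T. agree_on {- int N..int N} ((F ^^ i) x) ((F ^^ i) y)"
      by simp
    then show "agree_on {- int N - int k..int N + int k} x y"
      using window_step_iterate[OF step, where t = 0] by simp
  qed simp
qed

lemma card_TG_delta_words_le_1:
  assumes "\<And>w. w \<in> F_alpha F n p x \<Longrightarrow> agree_on (Jset G n p x) w x"
  shows "card (TG_delta_words \<mu> F G n \<delta> p x) \<le> 1"
proof -
  have "TG_delta_words \<mu> F G n \<delta> p x \<subseteq> {restrict x (Jset G n p x)}"
  proof
    fix u assume "u \<in> TG_delta_words \<mu> F G n \<delta> p x"
    then obtain z w where u: "u = restrict z (Jset G n p x)" and "w \<in> F_alpha F n p x"
      and "\<forall>j\<in>Jset G n p x. z j = w j"
      unfolding TG_delta_words_def TG_def by blast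
    with assms have "restrict z (Jset G n p x) = restrict x (Jset G n p x)"
      by (intro restrict_ext) (auto simp: agree_on_def)
    with u show "u \<in> {restrict x (Jset G n p x)}"
      by simp
  qed
  then show ?thesis
    using card_mono[of "{restrict x (Jset G n p x)}"] by simp
qed

lemma M_npd_integrand_le_1:
  assumes "prob_space \<mu>"
  shows "1 - ln (real (card (TG_delta_words \<mu> F G n \<delta> p x))) / (- ln (measure \<mu> (G_alpha G n p x x))) \<le> 1"
proof -
  have "0 \<le> ln (real (card (TG_delta_words \<mu> F G n \<delta> p x)))"
    by (cases "card (TG_delta_words \<mu> F G n \<delta> p x) = 0") auto
  moreover have "ln (measure \<mu> (G_alpha G n p x x)) \<le> 0"
  proof (cases "measure \<mu> (G_alpha G n p x x) = 0")
    case False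
    then have "0 < measure \<mu> (G_alpha G n p x x)"
      using measure_nonneg[of \<mu> "G_alpha G n p x x"] by linarith
    then show ?thesis
      using prob_space.prob_le_1[OF assms] by simp
  qed simp
  ultimately show ?thesis
    by (simp add: divide_nonneg_nonpos)
qed

lemma M_npd_le_1:
  assumes "prob_space \<mu>"
  shows "M_npd \<mu> F G n p \<delta> \<le> 1"
proof -
  let ?g = "\<lambda>x. 1 - ln (real (card (TG_delta_words \<mu> F G n \<delta> p x))) / (- ln (measure \<mu> (G_alpha G n p x x)))"
  have "integral\<^sup>L \<mu> ?g \<le> 1"
  proof (cases "integrable \<mu> ?g")
    case True
    then have "integral\<^sup>L \<mu> ?g \<le> (\<integral>x. 1 \<partial>\<mu>)"
      using M_npd_integrand_le_1[OF assms] prob_space.axioms(1)[OF assms]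
      by (intro integral_mono) (auto intro: finite_measure.integrable_const)
    then show ?thesis
      using prob_space.prob_space[OF assms] by simp
  qed (simp add: not_integrable_integral_eq)
  then show ?thesis
    by (simp add: M_npd_def)
qed

lemma M_npd_eq_1:
  assumes "prob_space \<mu>" and "\<And>x. card (TG_delta_words \<mu> F G n \<delta> p x) \<le> 1"
  shows "M_npd \<mu> F G n p \<delta> = 1"
proof -
  have "ln (real (card (TG_delta_words \<mu> F G n \<delta> p x))) = 0" for x
    using assms(2)[of x] by (cases "card (TG_delta_words \<mu> F G n \<delta> p x)") auto
  then show ?thesis
    using prob_space.prob_space[OF assms(1)] by (simp add: M_npd_def)
qed

lemma M_mu_eq_1I:
  assumes "prob_space \<mu>" and "\<And>\<delta>. eventually (\<lambda>n. M_npd \<mu> F G n p \<delta> = 1) sequentially"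
  shows "M_mu \<mu> F G = 1"
  unfolding M_mu_def
proof (rule antisym)
  have "limsup (\<lambda>n. ereal (M_npd \<mu> F G n q \<delta>)) \<le> 1" for q \<delta>
    using M_npd_le_1[OF assms(1)] by (intro Limsup_bounded always_eventually) simp
  then show "(SUP q. Limsup (at_right 0) (\<lambda>\<delta>. limsup (\<lambda>n. ereal (M_npd \<mu> F G n q \<delta>)))) \<le> 1"
    by (intro SUP_least Limsup_bounded always_eventually) simp
  have "limsup (\<lambda>n. ereal (M_npd \<mu> F G n p \<delta>)) = 1" for \<delta>
  proof (rule lim_imp_Limsup)
    show "((\<lambda>n. ereal (M_npd \<mu> F G n p \<delta>)) \<longlongrightarrow> 1) sequentially"
      using assms(2)[of \<delta>] by (rule tendsto_eventually[OF eventually_mono]) simp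
  qed simp
  then show "1 \<le> (SUP q. Limsup (at_right 0) (\<lambda>\<delta>. limsup (\<lambda>n. ereal (M_npd \<mu> F G n q \<delta>))))"
    by (intro SUP_upper2[of p]) (simp_all add: Limsup_const)
qed

lemma Jset_sym_speed:
  "Jset (sym_speed s) n p x = {- int (nat \<lceil>s * real n\<rceil>) - int p..int (nat \<lceil>s * real n\<rceil>) + int p}"
  by (auto simp: Jset_def sym_speed_def)

lemma half_rate_le_div:
  assumes "0 < T" and "T \<le> n"
  shows "real n / (2 * real T) \<le> real (n div T)"
proof -
  have "n < (n div T + 1) * T"
    unfolding distrib_right mult_1
    using div_mult_mod_eq[of n T] mod_less_divisor[OF assms(1), of n] by linarith
  also have "\<dots> \<le> 2 * (n div T) * T"
    using assms by (simp add: div_greater_zero_iff Suc_leI)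
  finally have "real n \<le> real (2 * (n div T) * T)"
    by (simp only: of_nat_le_iff)
  then show ?thesis
    using assms(1) by (simp add: pos_divide_le_eq)
qed

lemma F_alpha_determines_Jset:
  assumes "0 < T" and "T \<le> n"
    and window: "\<And>x y k. \<forall>i\<le>k * T. agree_on {- int N..int N} ((F ^^ i) x) ((F ^^ i) y) \<Longrightarrow>
       agree_on {- int N - int k..int N + int k} x y"
    and "w \<in> F_alpha F n N x"
  shows "agree_on (Jset (sym_speed (1 / (2 * real T))) n N x) w x"
proof -
  have "\<forall>i\<le>n div T * T. agree_on {- int N..int N} ((F ^^ i) w) ((F ^^ i) x)"
  proof (intro allI impI)
    fix i assume "i \<le> n div T * T"
    then have "i \<le> n"
      using div_times_less_eq_dividend le_trans by blast
    with \<open>w \<in> F_alpha F n N x\<close> show "agree_on {- int N..int N} ((F ^^ i) w) ((F ^^ i) x)"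
      by (auto simp: F_alpha_def agree_on_def abs_le_iff)
  qed
  then have "agree_on {- int N - int (n div T)..int N + int (n div T)} w x"
    by (rule window)
  moreover have "1 / (2 * real T) * real n \<le> real (n div T)"
    using half_rate_le_div[OF assms(1,2)] by simp
  ultimately show ?thesis
    unfolding Jset_sym_speed by (elim agree_on_subset) (auto simp: ceiling_le_iff)
qed

theorem proposition1:
  fixes F :: "('a::finite) config \<Rightarrow> 'a config" and \<mu> :: "'a config measure"
  assumes "cellular_automaton F" and "pos_expansive F"
    and "config_prob \<mu>" and "ergodic_measure \<mu> shift" and "invariant_measure \<mu> F"
  shows "\<exists>s::real. s > 0 \<and> M_mu \<mu> F (sym_speed s) = 1"
proof -
  obtain T N where "T > 0" and window:
    "\<And>x y k. \<forall>i\<le>k * T. agree_on {- int N..int N} ((F ^^ i) x) ((F ^^ i) y) \<Longrightarrow>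
       agree_on {- int N - int k..int N + int k} x y"
    using pos_expansive_ca_linear_window[OF assms(1,2)] by metis
  define s where "s = 1 / (2 * real T)"
  have prob: "prob_space \<mu>"
    using assms(3) by (simp add: config_prob_def)
  have "M_npd \<mu> F (sym_speed s) n N \<delta> = 1" if "T \<le> n" for n \<delta>
    using F_alpha_determines_Jset[OF \<open>T > 0\<close> that window] unfolding s_def
    by (intro M_npd_eq_1[OF prob] card_TG_delta_words_le_1)
  then have "M_mu \<mu> F (sym_speed s) = 1"
    by (intro M_mu_eq_1I[OF prob]) (auto simp: eventually_sequentially)
  moreover have "s > 0"
    using \<open>T > 0\<close> by (simp add: s_def)
  ultimately show ?thesis
    by blast
qed

end
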